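(* Every plane of $\mathcal W(5,q)$ containing a line of $\mathcal S$ is disjoint from $S_\gamma^G$.
   Context: Let $q$ be an even prime power and $\mathrm{PG}(5,q^2)$ have homogeneous coordinates $(X_1,\dots,X_6)$, points written as column vectors. Let $\Sigma$ be the set of points having a coordinate vector $(\alpha,\alpha^q,\delta_0,\beta,\beta^q,\delta_1)$ with $\alpha,\beta\in\mathbb F_{q^2}$, $\delta_0,\delta_1\in\mathbb F_q$ (a Baer subgeometry $\cong\mathrm{PG}(5,q)$). Let $\Pi=\Sigma\cap\{X_6=0\}$, $\mathcal Q=\Sigma\cap\{X_6=0,\ X_3^2+X_1X_5+X_2X_4=0\}$. Fix $\omega\in\mathbb F_{q^2}\setminus\mathbb F_q$ with $\omega+\omega^q=1$ and let $h(X,Y)=\omega X_1Y_4^q+\omega^qX_1Y_6^q+\omega^qX_2Y_5^q+\omega X_2Y_6^q+X_3Y_6^q+\omega^qX_4Y_1^q+\omega X_5Y_2^q+\omega X_6Y_1^q+\omega^qX_6Y_2^q+X_6Y_3^q$. Restricted to $\Sigma$, $P\perp R\iff h(P,R)=0$ defines a symplectic polarity $\perp$ of $\Sigma$; $\mathcal W(5,q)$ is the associated symplectic polar space (generators are totally isotropic planes). For $a,b,c,d\in\mathbb F_{q^2}$ with $ad+bc=1$ let $M_{a,b,c,d}$ be the $6\times6$ matrix with rows $(a^2,0,0,0,c^2,\tfrac{c(a+c\omega^q)}{\omega})$, $(0,a^{2q},0,c^{2q},0,\tfrac{c^q(a^q+c^q\omega)}{\omega^q})$, $(ab,a^qb^q,1,c^qd^q,cd,\tfrac{d(a+c\omega^q)}{\omega}+\tfrac{d^q(a^q+c^q\omega)}{\omega^q}+\tfrac{1}{\omega^{q+1}})$,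 $(0,b^{2q},0,d^{2q},0,\tfrac{d^q(b^q+d^q\omega)+\omega}{\omega^q})$, $(b^2,0,0,0,d^2,\tfrac{d(b+d\omega^q)+\omega^q}{\omega})$, $(0,0,0,0,0,1)$, and let $G$ be the group of projectivities $X\mapsto M_{a,b,c,d}X$. Fix $\gamma\in\mathbb F_{q^2}$ with $X^2+X+\gamma$ irreducible over $\mathbb F_{q^2}$, let $S_\gamma=\left(\frac{\gamma}{\omega},\frac{\gamma^q}{\omega^q},\frac{\omega^q\gamma}{\omega}+\frac{\omega\gamma^q}{\omega^q},1,1,1\right)$ and $S_\gamma^G$ its $G$-orbit. Let $\mathcal S$ be the set of the $q^2+1$ lines $S_t=\{(\lambda,\lambda^q,\lambda t+\lambda^qt^q,\lambda^qt^{2q},\lambda t^2,0):\lambda\in\mathbb F_{q^2}^*\}$, $t\in\mathbb F_{q^2}$, and $S_\infty=\{(0,0,0,\lambda^q,\lambda,0):\lambda\in\mathbb F_{q^2}^*\}$. *)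

theory Defs
  imports "HOL-Computational_Algebra.Polynomial"
begin

text \<open>Vectors of F^6 (F = GF(q^2)) as 6-tuples; projective points as the set of
  nonzero scalar multiples of a nonzero vector.\<close>

type_synonym 'a vec6 = "'a \<times> 'a \<times> 'a \<times> 'a \<times> 'a \<times> 'a"

definition zero6 :: "'a::field vec6" where
  "zero6 = (0,0,0,0,0,0)"

fun smul6 :: "'a::field \<Rightarrow> 'a vec6 \<Rightarrow> 'a vec6" where
  "smul6 c (x1,x2,x3,x4,x5,x6) = (c*x1,c*x2,c*x3,c*x4,c*x5,c*x6)"

fun add6 :: "'a::field vec6 \<Rightarrow> 'a vec6 \<Rightarrow> 'a vec6" where
  "add6 (x1,x2,x3,x4,x5,x6) (y1,y2,y3,y4,y5,y6) = (x1+y1,x2+y2,x3+y3,x4+y4,x5+y5,x6+y6)"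

definition pt :: "'a::field vec6 \<Rightarrow> 'a vec6 set" where
  "pt v = {smul6 c v | c. c \<noteq> 0}"

definition Fq :: "nat \<Rightarrow> 'a::field set" where
  "Fq q = {x. x ^ q = x}"

text \<open>Canonical coordinate vectors of the Baer subgeometry Sigma (an F_q-space).\<close>
definition SigmaVecs :: "nat \<Rightarrow> 'a::field vec6 set" where
  "SigmaVecs q = {(\<alpha>, \<alpha>^q, \<delta>0, \<beta>, \<beta>^q, \<delta>1) | \<alpha> \<beta> \<delta>0 \<delta>1. \<delta>0 \<in> Fq q \<and> \<delta>1 \<in> Fq q}"

fun hform :: "nat \<Rightarrow> 'a::field \<Rightarrow> 'a vec6 \<Rightarrow> 'a vec6 \<Rightarrow> 'a" where
  "hform q \<omega> (x1,x2,x3,x4,x5,x6) (y1,y2,y3,y4,y5,y6) =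
     \<omega>*x1*y4^q + \<omega>^q*x1*y6^q + \<omega>^q*x2*y5^q + \<omega>*x2*y6^q + x3*y6^q
     + \<omega>^q*x4*y1^q + \<omega>*x5*y2^q + \<omega>*x6*y1^q + \<omega>^q*x6*y2^q + x6*y3^q"

definition perp :: "nat \<Rightarrow> 'a::field \<Rightarrow> 'a vec6 set \<Rightarrow> 'a vec6 set \<Rightarrow> bool" where
  "perp q \<omega> P R \<longleftrightarrow> (\<forall>x\<in>P. \<forall>y\<in>R. hform q \<omega> x y = 0)"

definition Sigma_plane :: "nat \<Rightarrow> 'a::field vec6 set set \<Rightarrow> bool" where
  "Sigma_plane q P \<longleftrightarrow>
     (\<exists>u v w. u \<in> SigmaVecs q \<and> v \<in> SigmaVecs q \<and> w \<in> SigmaVecs q \<and>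
        (\<forall>a b c. a \<in> Fq q \<and> b \<in> Fq q \<and> c \<in> Fq q \<and>
            add6 (smul6 a u) (add6 (smul6 b v) (smul6 c w)) = zero6 \<longrightarrow> a = 0 \<and> b = 0 \<and> c = 0) \<and>
        P = {pt (add6 (smul6 a u) (add6 (smul6 b v) (smul6 c w))) | a b c.
               a \<in> Fq q \<and> b \<in> Fq q \<and> c \<in> Fq q \<and>
               add6 (smul6 a u) (add6 (smul6 b v) (smul6 c w)) \<noteq> zero6})"

definition W_plane :: "nat \<Rightarrow> 'a::field \<Rightarrow> 'a vec6 set set \<Rightarrow> bool" where
  "W_plane q \<omega> P \<longleftrightarrow> Sigma_plane q P \<and> (\<forall>X\<in>P. \<forall>Y\<in>P. perp q \<omega> X Y)"

text \<open>The lines of the spread S: S_t (t in F_{q^2}, encoded Some t) and S_infinity (None),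
  as sets of projective points.\<close>
fun S_line :: "nat \<Rightarrow> 'a::field option \<Rightarrow> 'a vec6 set set" where
  "S_line q (Some t) = {pt (l, l^q, l*t + l^q*t^q, l^q*t^(2*q), l*t^2, 0) | l. l \<noteq> 0}"
| "S_line q None = {pt (0, 0, 0, l^q, l, 0) | l. l \<noteq> 0}"

fun Mapp :: "nat \<Rightarrow> 'a::field \<Rightarrow> 'a \<Rightarrow> 'a \<Rightarrow> 'a \<Rightarrow> 'a \<Rightarrow> 'a vec6 \<Rightarrow> 'a vec6" where
  "Mapp q \<omega> a b c d (x1,x2,x3,x4,x5,x6) =
    (a^2*x1 + c^2*x5 + (c*(a + c*\<omega>^q)/\<omega>)*x6,
     a^(2*q)*x2 + c^(2*q)*x4 + (c^q*(a^q + c^q*\<omega>)/\<omega>^q)*x6,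
     a*b*x1 + a^q*b^q*x2 + x3 + c^q*d^q*x4 + c*d*x5
       + (d*(a + c*\<omega>^q)/\<omega> + d^q*(a^q + c^q*\<omega>)/\<omega>^q + 1/\<omega>^(q+1))*x6,
     b^(2*q)*x2 + d^(2*q)*x4 + ((d^q*(b^q + d^q*\<omega>) + \<omega>)/\<omega>^q)*x6,
     b^2*x1 + d^2*x5 + ((d*(b + d*\<omega>^q) + \<omega>^q)/\<omega>)*x6,
     x6)"

definition S_gamma :: "nat \<Rightarrow> 'a::field \<Rightarrow> 'a \<Rightarrow> 'a vec6" where
  "S_gamma q \<omega> \<gamma> = (\<gamma>/\<omega>, \<gamma>^q/\<omega>^q, \<omega>^q*\<gamma>/\<omega> + \<omega>*\<gamma>^q/\<omega>^q, 1, 1, 1)"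

definition S_gamma_orbit :: "nat \<Rightarrow> 'a::field \<Rightarrow> 'a \<Rightarrow> 'a vec6 set set" where
  "S_gamma_orbit q \<omega> \<gamma> = {pt (Mapp q \<omega> a b c d (S_gamma q \<omega> \<gamma>)) | a b c d. a*d + b*c = 1}"

end

theory Submission
  imports Defs "HOL-Computational_Algebra.Primes"
begin

text \<open>Let \<open>R\<close> be a point of the orbit lying in a totally isotropic plane through a
  spread line \<open>S_t\<close>.  Then \<open>R\<close> is perpendicular to every point of \<open>S_t\<close>, and
  evaluating \<open>h\<close> against the points of \<open>S_t\<close> gives \<open>A \<lambda> + B \<lambda>\<^sup>q = 0\<close> for all
  \<open>\<lambda> \<noteq> 0\<close>.  A nonzero polynomial of degree \<open>q\<close> cannot have all \<open>q\<^sup>2\<close> elements of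
  the field as roots, so \<open>A = 0\<close>.  But \<open>A\<close> is the value of the form \<open>\<gamma>x\<^sup>2 + xy + y\<^sup>2\<close> at the
  image \<open>(at + b, ct + d)\<close> of \<open>(t, 1)\<close> under \<open>[[a, b], [c, d]]\<close>, and this form is
  anisotropic because \<open>X\<^sup>2 + X + \<gamma>\<close> is irreducible.\<close>

text \<open>The library's \<open>finite_field_power_card_eq_same\<close> needs the sort \<open>finite_field\<close>,
  which \<open>{finite, field}\<close> does not entail.\<close>
lemma finite_field_power_card_eq:
  fixes x :: "'a::{finite,field}"
  shows "x ^ card (UNIV :: 'a set) = x"
proof (cases "x = 0")
  case False
  have "x * (\<Prod>y\<in>UNIV-{0}. x * y) = x * x ^ (card (UNIV :: 'a set) - 1) * \<Prod>(UNIV-{0})"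
    by (simp add: prod.distrib mult_ac)
  also have "x * x ^ (card (UNIV :: 'a set) - 1) = x ^ card (UNIV :: 'a set)"
    using finite_UNIV_card_ge_0[where 'a='a] by (simp flip: power_Suc)
  also have "(\<Prod>y\<in>UNIV-{0}. x * y) = (\<Prod>y\<in>UNIV-{0}. y)"
    by (rule prod.reindex_bij_witness[of _ "\<lambda>y. y / x" "\<lambda>y. x * y"]) (use False in auto)
  finally show ?thesis
    by simp
qed (use finite_UNIV_card_ge_0[where 'a='a] in auto)

lemma of_nat_card_eq_0: "of_nat (card (UNIV :: 'a::{finite,ring_1} set)) = (0 :: 'a)"
proof -
  have "(\<Sum>x\<in>UNIV. x + 1) = (\<Sum>x\<in>UNIV. x :: 'a)"
    by (rule sum.reindex_bij_witness[of _ "\<lambda>y. y - 1" "\<lambda>x. x + 1"]) auto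
  then show ?thesis
    by (simp add: sum.distrib)
qed

lemma CHAR_eq_2_if_card_power_2:
  assumes "card (UNIV :: 'a::{finite,field} set) = 2 ^ n"
  shows "CHAR('a) = 2"
proof -
  have "(2::'a) ^ n = 0"
    using of_nat_card_eq_0[where 'a='a] assms by simp
  then have "CHAR('a) dvd 2"
    using of_nat_eq_0_iff_char_dvd[where 'a='a, of 2] by simp
  moreover have "CHAR('a) \<noteq> 1"
    using of_nat_CHAR[where 'a='a] by auto
  ultimately show ?thesis
    using dvd_imp_le[of "CHAR('a)" 2] by (cases "CHAR('a)") auto
qed

lemma frobenius_card_square_power_2:
  fixes u v :: "'a::{finite,field}"
  assumes "q = 2 ^ e" "card (UNIV :: 'a set) = q^2"
  shows char_2: "(2::'a) = 0"
    and frobenius_involution: "(u^q)^q = u"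
    and frobenius_add: "(u + v)^q = u^q + v^q"
proof -
  have CHAR: "CHAR('a) = 2"
    using assms by (intro CHAR_eq_2_if_card_power_2) (simp flip: power_mult)
  then show "(2::'a) = 0"
    using of_nat_CHAR[where 'a='a] by simp
  show "(u^q)^q = u"
    using finite_field_power_card_eq[of u] assms(2) by (simp flip: power_mult add: power2_eq_square)
  show "(u + v)^q = u^q + v^q"
    using CHAR assms(1) by (intro freshmans_dream') simp_all
qed

lemma irreducible_quadratic_no_root:
  fixes \<gamma> r :: "'a::field"
  assumes "irreducible [:\<gamma>, 1, 1:]"
  shows "\<gamma> + r + r^2 \<noteq> 0"
proof
  assume "\<gamma> + r + r^2 = 0"
  then have "poly [:\<gamma>, 1, 1:] r = 0"
    by (simp add: power2_eq_square algebra_simps)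
  then have "[:-r, 1:] dvd [:\<gamma>, 1, 1:]"
    using poly_eq_0_iff_dvd by blast
  from irreducibleD'[OF assms this] show False
    by (auto dest: dvd_imp_degree_le simp: is_unit_iff_degree)
qed

definition binary_form :: "'a::field \<Rightarrow> 'a \<Rightarrow> 'a \<Rightarrow> 'a" where
  "binary_form \<gamma> x y = \<gamma> * x^2 + x * y + y^2"

lemma binary_form_eq_0_iff:
  fixes \<gamma> x y :: "'a::field"
  assumes "irreducible [:\<gamma>, 1, 1:]"
  shows "binary_form \<gamma> x y = 0 \<longleftrightarrow> x = 0 \<and> y = 0"
proof (cases "x = 0")
  case False
  have "binary_form \<gamma> x y = x^2 * (\<gamma> + y/x + (y/x)^2)"
    using False by (simp add: binary_form_def field_simps power2_eq_square)
  with False irreducible_quadratic_no_root[OF assms] show ?thesis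
    by simp
qed (simp add: binary_form_def)

lemma semilinear_vanishing_imp_zero:
  fixes A B :: "'a::{finite,field}"
  assumes "2 \<le> q" "q < card (UNIV :: 'a set)"
    and vanish: "\<And>l. l \<noteq> 0 \<Longrightarrow> A * l + B * l^q = 0"
  shows "A = 0"
proof (rule ccontr)
  assume "A \<noteq> 0"
  define p where "p = [:0, A:] + monom B q"
  have "coeff p 1 = A"
    using \<open>2 \<le> q\<close> by (simp add: p_def coeff_monom)
  with \<open>A \<noteq> 0\<close> have "p \<noteq> 0"
    by auto
  have "degree p \<le> q"
    unfolding p_def using \<open>2 \<le> q\<close> by (intro degree_add_le degree_monom_le) simp_all
  have "poly p x = 0" for x
    using vanish[of x] \<open>2 \<le> q\<close> by (cases "x = 0") (auto simp: p_def poly_monom algebra_simps)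
  then have "card (UNIV :: 'a set) \<le> q"
    using card_poly_roots_bound[OF \<open>p \<noteq> 0\<close>] \<open>degree p \<le> q\<close> by simp
  with assms(2) show False
    by simp
qed

lemma in_pt: "v \<in> pt v"
  unfolding pt_def by (cases v) (auto intro!: exI[of _ 1])

definition spread_vec :: "nat \<Rightarrow> 'a::field option \<Rightarrow> 'a \<Rightarrow> 'a vec6" where
  "spread_vec q s l = (case s of
       Some t \<Rightarrow> (l, l^q, l*t + l^q*t^q, l^q*t^(2*q), l*t^2, 0)
     | None \<Rightarrow> (0, 0, 0, l^q, l, 0))"

lemma S_line_eq: "S_line q s = {pt (spread_vec q s l) | l. l \<noteq> 0}"
  by (cases s) (simp_all add: spread_vec_def)

text \<open>Image of the point \<open>(t, 1)\<close>, resp.\ \<open>(1, 0)\<close> for \<open>S_\<infinity>\<close>, of the projective line under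
  \<open>[[a, b], [c, d]]\<close>.\<close>
definition spread_coords :: "'a::field \<Rightarrow> 'a \<Rightarrow> 'a \<Rightarrow> 'a \<Rightarrow> 'a option \<Rightarrow> 'a \<times> 'a" where
  "spread_coords a b c d s = (case s of Some t \<Rightarrow> (a*t + b, c*t + d) | None \<Rightarrow> (a, c))"

lemma spread_coords_nonzero:
  fixes a b c d :: "'a::field"
  assumes "(2::'a) = 0" "a*d + b*c = 1"
  shows "spread_coords a b c d s \<noteq> (0, 0)"
proof
  assume zero: "spread_coords a b c d s = (0, 0)"
  show False
  proof (cases s)
    case (Some t)
    with zero have "b = -(a*t)" "d = -(c*t)"
      by (auto simp: spread_coords_def add_eq_0_iff)
    with assms show False
      by (simp add: algebra_simps)
  qed (use zero assms in \<open>simp add: spread_coords_def\<close>)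
qed

lemma hform_spread_vec_Some:
  fixes \<omega> t l x1 x2 x3 x4 x5 x6 :: "'a::field"
  assumes q: "q > 0"
    and frob_inv: "\<And>u::'a. (u^q)^q = u" and frob_add: "\<And>u v::'a. (u + v)^q = u^q + v^q"
  shows "hform q \<omega> (x1, x2, x3, x4, x5, x6) (spread_vec q (Some t) l)
       = (\<omega>*x1*t^2 + \<omega>*x5 + x6*t + \<omega>^q*x6) * l
         + (\<omega>^q*x2*t^(2*q) + \<omega>^q*x4 + x6*t^q + \<omega>*x6) * l^q"
proof -
  have "(l^q * t^(2*q))^q = l * t^2"
    by (simp only: power_mult power_mult_distrib frob_inv)
  moreover have "(l * t^2)^q = l^q * t^(2*q)"
    by (simp only: power_mult power_mult_distrib)
  moreover have "(l*t + l^q*t^q)^q = l^q*t^q + l*t"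
    by (simp add: frob_add power_mult_distrib frob_inv)
  moreover have "(0::'a)^q = 0"
    using q by simp
  ultimately show ?thesis
    unfolding spread_vec_def option.case
    by (simp only: hform.simps frob_inv) (simp add: algebra_simps)
qed

lemma hform_spread_vec_None:
  fixes \<omega> l x1 x2 x3 x4 x5 x6 :: "'a::field"
  assumes "q > 0" and frob_inv: "\<And>u::'a. (u^q)^q = u"
  shows "hform q \<omega> (x1, x2, x3, x4, x5, x6) (spread_vec q None l) = \<omega>*x1 * l + \<omega>^q*x2 * l^q"
  using assms by (simp add: spread_vec_def power_0_left algebra_simps)

lemma Mapp_S_gamma:
  fixes \<omega> \<gamma> a b c d :: "'a::field"
  assumes "\<omega> \<noteq> 0" "\<omega> + \<omega>^q = 1"
  obtains r1 r2 r3 r4 r5 where "Mapp q \<omega> a b c d (S_gamma q \<omega> \<gamma>) = (r1, r2, r3, r4, r5, 1)"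
    "\<omega> * r1 = binary_form \<gamma> a c" "\<omega> * r5 = binary_form \<gamma> b d + \<omega>^q"
proof -
  have \<omega>q: "\<omega>^q = 1 - \<omega>"
    using assms(2) by (simp add: algebra_simps)
  have "\<omega> * (a^2*(\<gamma>/\<omega>) + c^2 + c*(a + c*\<omega>^q)/\<omega>) = a^2*\<gamma> + \<omega>*c^2 + c*(a + c*\<omega>^q)"
    using assms(1) by (simp add: field_simps)
  also have "\<dots> = binary_form \<gamma> a c"
    by (simp add: binary_form_def \<omega>q algebra_simps power2_eq_square)
  moreover have "\<omega> * (b^2*(\<gamma>/\<omega>) + d^2 + (d*(b + d*\<omega>^q) + \<omega>^q)/\<omega>)
      = b^2*\<gamma> + \<omega>*d^2 + d*(b + d*\<omega>^q) + \<omega>^q"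
    using assms(1) by (simp add: field_simps)
  moreover have "\<dots> = binary_form \<gamma> b d + \<omega>^q"
    by (simp add: binary_form_def \<omega>q algebra_simps power2_eq_square)
  ultimately show thesis
    by (intro that) (simp_all add: S_gamma_def)
qed

lemma hform_orbit_spread_vec:
  fixes \<omega> \<gamma> a b c d :: "'a::field"
  assumes q: "q > 0"
    and frob_inv: "\<And>u::'a. (u^q)^q = u" and frob_add: "\<And>u v::'a. (u + v)^q = u^q + v^q"
    and char2: "(2::'a) = 0"
    and om: "\<omega> \<noteq> 0" "\<omega> + \<omega>^q = 1"
    and det: "a*d + b*c = 1"
  shows "\<exists>B. \<forall>l. hform q \<omega> (Mapp q \<omega> a b c d (S_gamma q \<omega> \<gamma>)) (spread_vec q s l)
             = case_prod (binary_form \<gamma>) (spread_coords a b c d s) * l + B * l^q"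
proof -
  obtain r1 r2 r3 r4 r5 where r: "Mapp q \<omega> a b c d (S_gamma q \<omega> \<gamma>) = (r1, r2, r3, r4, r5, 1)"
    and r1: "\<omega> * r1 = binary_form \<gamma> a c" and r5: "\<omega> * r5 = binary_form \<gamma> b d + \<omega>^q"
    using Mapp_S_gamma[OF om] by blast
  show ?thesis
  proof (cases s)
    case None
    then show ?thesis
      using r r1 by (auto simp: hform_spread_vec_None[OF q frob_inv] spread_coords_def)
  next
    case (Some t)
    have "\<omega>*r1*t^2 + \<omega>*r5 + t + \<omega>^q
        = binary_form \<gamma> (a*t + b) (c*t + d) + (1 - (a*d + b*c))*t + 2*(\<omega>^q - \<gamma>*a*b*t - c*d*t)"
      unfolding r1 r5 by (simp add: binary_form_def algebra_simps power2_eq_square)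
    also have "\<dots> = binary_form \<gamma> (a*t + b) (c*t + d)"
      using char2 det by simp
    finally show ?thesis
      using Some r by (auto simp: hform_spread_vec_Some[OF q frob_inv frob_add] spread_coords_def)
  qed
qed

lemma orbit_point_not_perp_spread_line:
  fixes \<omega> \<gamma> a b c d :: "'a::{finite,field}"
  assumes card: "card (UNIV :: 'a set) = q^2" and q: "2 \<le> q"
    and char2: "(2::'a) = 0"
    and frob_inv: "\<And>u::'a. (u^q)^q = u" and frob_add: "\<And>u v::'a. (u + v)^q = u^q + v^q"
    and om: "\<omega> \<noteq> 0" "\<omega> + \<omega>^q = 1"
    and irr: "irreducible [:\<gamma>, 1, 1:]"
    and det: "a*d + b*c = 1"
  obtains l where "l \<noteq> 0" "hform q \<omega> (Mapp q \<omega> a b c d (S_gamma q \<omega> \<gamma>)) (spread_vec q s l) \<noteq> 0"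
proof -
  obtain B where B: "\<And>l. hform q \<omega> (Mapp q \<omega> a b c d (S_gamma q \<omega> \<gamma>)) (spread_vec q s l)
             = case_prod (binary_form \<gamma>) (spread_coords a b c d s) * l + B * l^q"
    using hform_orbit_spread_vec[OF _ frob_inv frob_add char2 om det] q by fastforce
  have "q < q^2"
    using q by (simp add: power2_eq_square)
  moreover have "case_prod (binary_form \<gamma>) (spread_coords a b c d s) \<noteq> 0"
    using spread_coords_nonzero[OF char2 det, of s] binary_form_eq_0_iff[OF irr]
    by (auto split: prod.split)
  ultimately show thesis
    using semilinear_vanishing_imp_zero[OF q] card that B by metis
qed

theorem mainTheorem15:
  fixes q :: nat and \<omega> \<gamma> :: "'a::{finite,field}" and P :: "'a vec6 set set"
  assumes q_even_pp: "\<exists>e\<ge>1. q = 2 ^ e"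
    and card: "card (UNIV :: 'a set) = q ^ 2"
    and om: "\<omega> \<notin> Fq q" "\<omega> + \<omega> ^ q = 1"
    and irr: "irreducible [:\<gamma>, 1, 1:]"
    and plane: "W_plane q \<omega> P"
    and contains: "\<exists>t. S_line q t \<subseteq> P"
  shows "P \<inter> S_gamma_orbit q \<omega> \<gamma> = {}"
proof (rule ccontr)
  assume "P \<inter> S_gamma_orbit q \<omega> \<gamma> \<noteq> {}"
  then obtain a b c d where det: "a*d + b*c = 1"
    and X: "pt (Mapp q \<omega> a b c d (S_gamma q \<omega> \<gamma>)) \<in> P"
    unfolding S_gamma_orbit_def by blast
  obtain s where s: "S_line q s \<subseteq> P"
    using contains by blast
  obtain e where e: "e \<ge> 1" "q = 2^e"
    using q_even_pp by blast
  have q: "2 \<le> q"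
    using e by (metis one_le_numeral power_increasing power_one_right)
  have "\<omega> \<noteq> 0"
    using om(1) q by (auto simp: Fq_def)
  with orbit_point_not_perp_spread_line[OF card q frobenius_card_square_power_2[OF e(2) card]
    _ om(2) irr det]
  obtain l where "l \<noteq> 0"
    and "hform q \<omega> (Mapp q \<omega> a b c d (S_gamma q \<omega> \<gamma>)) (spread_vec q s l) \<noteq> 0"
    by blast
  moreover have "perp q \<omega> (pt (Mapp q \<omega> a b c d (S_gamma q \<omega> \<gamma>))) (pt (spread_vec q s l))"
    using plane X s \<open>l \<noteq> 0\<close> by (auto simp: W_plane_def S_line_eq)
  ultimately show False
    by (auto simp: perp_def in_pt)
qed

end
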